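(* Let $n\geq 3$, $a>1$, $p,q\in\mathbb{R}$, and let $f_t(x)$, $x\in[1,a]$, solve $$\dot f=u''(x)\left(\frac{f''}{1+f'^2}+(n-1)\frac{xf'-f}{x^2+f^2}\right),\qquad f_t(1)=q,\ f_t(a)=p,$$ where $f_0$ satisfies the supercritical phase assumption $(n-1)\arctan\left(\frac{f_0}{x}\right)+\arctan(f_0')>(n-2)\frac{\pi}{2}$. Then $f_t$ has bounded first derivative for all finite times; in particular there exist uniform constants $A,B$ such that $$\sup_{x\in[1,a]}|f_t'(x)|\leq A(1+t)e^{Bt}$$ for all $t$ for which the flow is defined.
   Context: This is the line bundle mean curvature flow on the blowup of $\mathbb{P}^n$ at a point under Calabi symmetry, written in the Legendre coordinate $x\in[1,a]$: $u''$ is the smooth function of $x$ coming from the Calabi-symmetric K\"ahler form $\omega=i\partial\bar\partial u$ in $a[H]-[E]$ (positive on $(1,a)$, vanishing linearly at the endpoints), and $f$ encodes a Calabi-symmetric form $\alpha_t$ in $p[H]-q[E]$ whose eigenvalues relative to $\omega$ are $f/x$ (multiplicity $n-1$) and $f'$, so its angle is $\Theta=(n-1)\arctan(f/x)+\arctan(f')$. *)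

theory Defs
  imports "HOL-Analysis.Analysis" "HOL-Library.Extended_Real"
begin

text \<open>Smoothness (C-infinity up to the boundary) of a function of two real variables
  (t,x) on a set S, witnessed by a family D i j of its mixed partial derivatives
  (i derivatives in t, j derivatives in x), all continuous on S, with D 0 0 = F.\<close>
definition smooth2_on ::
  "(real \<times> real) set \<Rightarrow> (real \<times> real \<Rightarrow> real) \<Rightarrow> (nat \<Rightarrow> nat \<Rightarrow> real \<times> real \<Rightarrow> real) \<Rightarrow> bool" where
  "smooth2_on S F D \<longleftrightarrow>
     (\<forall>z\<in>S. D 0 0 z = F z) \<and>
     (\<forall>i j. continuous_on S (D i j)) \<and>
     (\<forall>i j t x. (t, x) \<in> S \<longrightarrow>
        ((\<lambda>s. D i j (s, x)) has_real_derivative D (Suc i) j (t, x)) (at t within {s. (s, x) \<in> S}) \<and>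
        ((\<lambda>y. D i j (t, y)) has_real_derivative D i (Suc j) (t, x)) (at x within {y. (t, y) \<in> S}))"

definition smooth1 :: "(real \<Rightarrow> real) \<Rightarrow> bool" where
  "smooth1 g \<longleftrightarrow> (\<forall>k x. ((deriv ^^ k) g) differentiable (at x))"

end

(*
  The angle Theta = (n - 1) arctan (f/x) + arctan f' turns the flow into f_t = u'' Theta_x.
  Differentiating in t, Theta satisfies a parabolic equation whose diffusion coefficient u''
  vanishes at the endpoints, so by the maximum principle min Theta never decreases and the
  supercritical bound Theta > (n - 2) pi/2 persists. As arctan f' < pi/2 this forces f > 0, and the
  maximum principle with the fixed boundary values bounds f from above; then Theta >= min Theta(0)
  bounds f' from below. For the upper bound, differentiate f_t = u'' Theta_x in x: at a spatial
  maximum of f' exceeding f every term has a sign except u''' (n - 1)(x f' - f)/(x^2 + f^2), which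
  is at most linear in f'. Hence f' stays below a barrier M e^(B t).
*)
theory Submission
  imports Defs
begin

section \<open>Sign conditions at extrema on a compact interval\<close>

lemma DERIV_within_Icc_pos_imp_less:
  fixes \<phi> \<phi>' :: "real \<Rightarrow> real"
  assumes der: "\<And>y. y \<in> {lo..hi} \<Longrightarrow> (\<phi> has_real_derivative \<phi>' y) (at y within {lo..hi})"
    and "lo \<le> c" "c < d" "d \<le> hi" and pos: "\<And>y. c < y \<Longrightarrow> y < d \<Longrightarrow> \<phi>' y > 0"
  shows "\<phi> c < \<phi> d"
proof (rule DERIV_pos_imp_increasing_open[OF \<open>c < d\<close>])
  fix y assume y: "c < y" "y < d"
  then have "at y within {lo..hi} = at y"
    using assms by (intro at_within_Icc_at) auto
  with der[of y] y assms have "(\<phi> has_real_derivative \<phi>' y) (at y)"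
    by auto
  with pos y show "\<exists>l. (\<phi> has_real_derivative l) (at y) \<and> 0 < l"
    by blast
next
  have "continuous_on {lo..hi} \<phi>"
    using der by (rule DERIV_continuous_on)
  then show "continuous_on {c..d} \<phi>"
    by (rule continuous_on_subset) (use assms in auto)
qed

lemma DERIV_within_Icc_neg_imp_greater:
  fixes \<phi> \<phi>' :: "real \<Rightarrow> real"
  assumes "\<And>y. y \<in> {lo..hi} \<Longrightarrow> (\<phi> has_real_derivative \<phi>' y) (at y within {lo..hi})"
    and "lo \<le> c" "c < d" "d \<le> hi" and "\<And>y. c < y \<Longrightarrow> y < d \<Longrightarrow> \<phi>' y < 0"
  shows "\<phi> c > \<phi> d"
  using DERIV_within_Icc_pos_imp_less[of lo hi "\<lambda>y. - \<phi> y" "\<lambda>y. - \<phi>' y" c d] assms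
  by (auto intro: DERIV_minus)

lemma DERIV_within_Icc_pos_right_nbhd:
  fixes h :: "real \<Rightarrow> real"
  assumes der: "(h has_real_derivative l) (at x within {lo..hi})" and "0 < l" "lo \<le> x" "x < hi"
  obtains c where "x < c" "c \<le> hi" "\<And>y. x < y \<Longrightarrow> y < c \<Longrightarrow> h x < h y"
proof -
  obtain d where "d > 0"
    and d: "\<And>s. 0 < s \<Longrightarrow> x + s \<in> {lo..hi} \<Longrightarrow> s < d \<Longrightarrow> h x < h (x + s)"
    using has_real_derivative_pos_inc_right[OF der \<open>0 < l\<close>] by blast
  show thesis
  proof (rule that[of "min hi (x + d)"])
    fix y assume "x < y" "y < min hi (x + d)"
    then show "h x < h y"
      using d[of "y - x"] assms by auto
  qed (use \<open>d > 0\<close> assms in auto)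
qed

lemma DERIV_within_Icc_pos_left_nbhd:
  fixes h :: "real \<Rightarrow> real"
  assumes der: "(h has_real_derivative l) (at x within {lo..hi})" and "0 < l" "lo < x" "x \<le> hi"
  obtains c where "lo \<le> c" "c < x" "\<And>y. c < y \<Longrightarrow> y < x \<Longrightarrow> h y < h x"
proof -
  obtain d where "d > 0"
    and d: "\<And>s. 0 < s \<Longrightarrow> x - s \<in> {lo..hi} \<Longrightarrow> s < d \<Longrightarrow> h (x - s) < h x"
    using has_real_derivative_pos_inc_left[OF der \<open>0 < l\<close>] by blast
  show thesis
  proof (rule that[of "max lo (x - d)"])
    fix y assume "max lo (x - d) < y" "y < x"
    then show "h y < h x"
      using d[of "x - y"] assms by auto
  qed (use \<open>d > 0\<close> assms in auto)
qed

lemma DERIV_within_Icc_sign_at_max: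
  fixes \<phi> :: "real \<Rightarrow> real"
  assumes der: "(\<phi> has_real_derivative l) (at x within {lo..hi})"
    and max: "\<And>y. y \<in> {lo..hi} \<Longrightarrow> \<phi> y \<le> \<phi> x" and x: "x \<in> {lo..hi}"
  shows "x < hi \<Longrightarrow> l \<le> 0" and "lo < x \<Longrightarrow> 0 \<le> l"
proof -
  assume "x < hi"
  have "lo \<le> x" using x by simp
  show "l \<le> 0"
  proof (rule ccontr)
    assume "\<not> l \<le> 0"
    then have "0 < l" by simp
    obtain c where c: "x < c" "c \<le> hi" and inc: "\<And>y. x < y \<Longrightarrow> y < c \<Longrightarrow> \<phi> x < \<phi> y"
      using DERIV_within_Icc_pos_right_nbhd[OF der \<open>0 < l\<close> \<open>lo \<le> x\<close> \<open>x < hi\<close>] by blast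
    have "\<phi> x < \<phi> ((x + c) / 2)"
      by (rule inc) (use c in auto)
    moreover have "\<phi> ((x + c) / 2) \<le> \<phi> x"
      by (rule max) (use c \<open>lo \<le> x\<close> in auto)
    ultimately show False by simp
  qed
next
  assume "lo < x"
  have "x \<le> hi" using x by simp
  show "0 \<le> l"
  proof (rule ccontr)
    assume "\<not> 0 \<le> l"
    then have "0 < - l" by simp
    obtain c where c: "lo \<le> c" "c < x" and dec: "\<And>y. c < y \<Longrightarrow> y < x \<Longrightarrow> - \<phi> y < - \<phi> x"
      using DERIV_within_Icc_pos_left_nbhd[OF DERIV_minus[OF der] \<open>0 < - l\<close> \<open>lo < x\<close> \<open>x \<le> hi\<close>] by blast
    have "- \<phi> ((c + x) / 2) < - \<phi> x"
      by (rule dec) (use c in auto)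
    moreover have "\<phi> ((c + x) / 2) \<le> \<phi> x"
      by (rule max) (use c \<open>x \<le> hi\<close> in auto)
    ultimately show False by simp
  qed
qed

lemma DERIV_within_Icc_interior_max:
  fixes \<phi> \<phi>' :: "real \<Rightarrow> real"
  assumes der: "\<And>y. y \<in> {lo..hi} \<Longrightarrow> (\<phi> has_real_derivative \<phi>' y) (at y within {lo..hi})"
    and der2: "(\<phi>' has_real_derivative l) (at x within {lo..hi})"
    and x: "lo < x" "x < hi" and max: "\<And>y. y \<in> {lo..hi} \<Longrightarrow> \<phi> y \<le> \<phi> x"
  shows "\<phi>' x = 0" and "l \<le> 0"
proof -
  have x': "x \<in> {lo..hi}" using x by simp
  show crit: "\<phi>' x = 0"
    using DERIV_within_Icc_sign_at_max[OF der[OF x'] max x'] x by fastforce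
  show "l \<le> 0"
  proof (rule ccontr)
    assume "\<not> l \<le> 0"
    then have "0 < l" by simp
    obtain c where c: "lo \<le> c" "c < x" and neg: "\<And>y. c < y \<Longrightarrow> y < x \<Longrightarrow> \<phi>' y < \<phi>' x"
      using DERIV_within_Icc_pos_left_nbhd[OF der2 \<open>0 < l\<close> x(1) less_imp_le[OF x(2)]]
      by blast
    have "\<phi> x < \<phi> c"
      using DERIV_within_Icc_neg_imp_greater[OF der c less_imp_le[OF x(2)]] neg crit by simp
    moreover have "\<phi> c \<le> \<phi> x"
      by (rule max) (use c x in auto)
    ultimately show False by simp
  qed
qed

lemma DERIV_within_Icc_weighted_flux_at_min:
  fixes \<phi> \<phi>' u h :: "real \<Rightarrow> real"
  assumes "lo < hi"
    and der: "\<And>y. y \<in> {lo..hi} \<Longrightarrow> (\<phi> has_real_derivative \<phi>' y) (at y within {lo..hi})"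
    and flux: "\<And>y. y \<in> {lo..hi} \<Longrightarrow> h y = u y * \<phi>' y"
    and der_flux: "(h has_real_derivative l) (at x within {lo..hi})"
    and u_pos: "\<And>y. lo < y \<Longrightarrow> y < hi \<Longrightarrow> u y > 0" and "u lo = 0" "u hi = 0"
    and x: "x \<in> {lo..hi}" and min: "\<And>y. y \<in> {lo..hi} \<Longrightarrow> \<phi> x \<le> \<phi> y"
  shows "h x = 0" and "0 \<le> l"
proof -
  have max: "- \<phi> y \<le> - \<phi> x" if "y \<in> {lo..hi}" for y
    using min[OF that] by simp
  have "\<phi>' x = 0" if "lo < x" "x < hi"
    using DERIV_within_Icc_sign_at_max[OF DERIV_minus[OF der[OF x]] max x] that by fastforce
  then show hx: "h x = 0"
    using flux[OF x] x \<open>u lo = 0\<close> \<open>u hi = 0\<close> by (cases "x = lo \<or> x = hi") auto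
  show "0 \<le> l"
  proof (rule ccontr)
    assume "\<not> 0 \<le> l"
    then have "0 < - l" by simp
    show False
    proof (cases "x < hi")
      case True
      have "lo \<le> x" using x by simp
      obtain c where c: "x < c" "c \<le> hi" and neg: "\<And>y. x < y \<Longrightarrow> y < c \<Longrightarrow> - h x < - h y"
        using DERIV_within_Icc_pos_right_nbhd[OF DERIV_minus[OF der_flux] \<open>0 < - l\<close> \<open>lo \<le> x\<close> True]
        by blast
      have neg_deriv: "\<phi>' y < 0" if "x < y" "y < c" for y
      proof -
        have "u y * \<phi>' y < 0"
          using neg[OF that] hx flux[of y] that c \<open>lo \<le> x\<close> by simp
        moreover have "u y > 0"
          using u_pos that c \<open>lo \<le> x\<close> by simp
        ultimately show ?thesis by (simp add: mult_less_0_iff)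
      qed
      have "\<phi> c < \<phi> x"
        by (rule DERIV_within_Icc_neg_imp_greater[OF der \<open>lo \<le> x\<close> c(1) c(2) neg_deriv])
      moreover have "\<phi> x \<le> \<phi> c"
        by (rule min) (use c x in auto)
      ultimately show False by simp
    next
      case False
      then have "lo < x" "x \<le> hi" using x \<open>lo < hi\<close> by auto
      obtain c where c: "lo \<le> c" "c < x" and pos: "\<And>y. c < y \<Longrightarrow> y < x \<Longrightarrow> - h y < - h x"
        using DERIV_within_Icc_pos_left_nbhd[OF DERIV_minus[OF der_flux] \<open>0 < - l\<close> \<open>lo < x\<close> \<open>x \<le> hi\<close>]
        by blast
      have pos_deriv: "\<phi>' y > 0" if "c < y" "y < x" for y
      proof -
        have "u y * \<phi>' y > 0"
          using pos[OF that] hx flux[of y] that c \<open>x \<le> hi\<close> by simp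
        moreover have "u y > 0"
          using u_pos that c \<open>x \<le> hi\<close> by simp
        ultimately show ?thesis by (simp add: zero_less_mult_iff)
      qed
      have "\<phi> c < \<phi> x"
        by (rule DERIV_within_Icc_pos_imp_less[OF der c(1) c(2) \<open>x \<le> hi\<close> pos_deriv])
      moreover have "\<phi> x \<le> \<phi> c"
        by (rule min) (use c x in auto)
      ultimately show False by simp
    qed
  qed
qed

section \<open>A maximum principle in time\<close>

lemma first_touching_time:
  fixes g :: "real \<times> 'a::t2_space \<Rightarrow> real" and X :: "'a set"
  assumes "compact X" "0 \<le> t1" "x1 \<in> X" "0 \<le> g (t1, x1)"
    and cont: "continuous_on ({0..t1} \<times> X) g"
  obtains t0 x0 where "0 \<le> t0" "t0 \<le> t1" "x0 \<in> X" "0 \<le> g (t0, x0)"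
    and "\<And>s y. 0 \<le> s \<Longrightarrow> s < t0 \<Longrightarrow> y \<in> X \<Longrightarrow> g (s, y) < 0"
proof -
  define Z where "Z = ({0..t1} \<times> X) \<inter> g -` {0..}"
  have K: "compact ({0..t1} \<times> X)"
    using \<open>compact X\<close> by (intro compact_Times) auto
  have "closed Z"
    unfolding Z_def using cont compact_imp_closed[OF K]
    by (intro continuous_closed_preimage) auto
  then have "compact (({0..t1} \<times> X) \<inter> Z)"
    using K by (intro compact_Int_closed)
  moreover have "({0..t1} \<times> X) \<inter> Z = Z"
    unfolding Z_def by blast
  ultimately have "compact Z" by simp
  then have "compact (fst ` Z)"
    by (intro compact_continuous_image continuous_intros)
  moreover have "(t1, x1) \<in> Z"
    using assms unfolding Z_def by auto
  ultimately obtain t0 where "t0 \<in> fst ` Z" and first: "\<And>s. s \<in> fst ` Z \<Longrightarrow> t0 \<le> s"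
    using compact_attains_inf[of "fst ` Z"] by blast
  then obtain x0 where "(t0, x0) \<in> Z" by auto
  show thesis
  proof (rule that[of t0 x0])
    show "0 \<le> t0" "t0 \<le> t1" "x0 \<in> X" "0 \<le> g (t0, x0)"
      using \<open>(t0, x0) \<in> Z\<close> unfolding Z_def by auto
    fix s y assume "0 \<le> s" "s < t0" "y \<in> X"
    show "g (s, y) < 0"
    proof (rule ccontr)
      assume "\<not> g (s, y) < 0"
      then have "s \<in> fst ` Z"
        using \<open>0 \<le> s\<close> \<open>s < t0\<close> \<open>y \<in> X\<close> \<open>t0 \<le> t1\<close> unfolding Z_def
        by (auto intro!: image_eqI[where x = "(s, y)"])
      then show False
        using first \<open>s < t0\<close> by fastforce
    qed
  qed
qed

lemma parabolic_max_principle: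
  fixes g gt :: "real \<times> 'a::t2_space \<Rightarrow> real" and X :: "'a set"
  assumes "compact X" "0 \<le> t1" "x1 \<in> X"
    and cont: "continuous_on ({0..t1} \<times> X) g"
    and der: "\<And>t x. t \<in> {0..t1} \<Longrightarrow> x \<in> X \<Longrightarrow>
      ((\<lambda>s. g (s, x)) has_real_derivative gt (t, x)) (at t within {0..t})"
    and init: "\<And>x. x \<in> X \<Longrightarrow> g (0, x) < 0"
    and touch: "\<And>t x. 0 < t \<Longrightarrow> t \<le> t1 \<Longrightarrow> x \<in> X \<Longrightarrow> g (t, x) = 0 \<Longrightarrow>
      (\<And>y. y \<in> X \<Longrightarrow> g (t, y) \<le> 0) \<Longrightarrow> gt (t, x) < 0"
  shows "g (t1, x1) < 0"
proof (rule ccontr)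
  assume "\<not> g (t1, x1) < 0"
  then have "0 \<le> g (t1, x1)" by simp
  then obtain t0 x0 where t0: "0 \<le> t0" "t0 \<le> t1" and "x0 \<in> X" "0 \<le> g (t0, x0)"
    and before: "\<And>s y. 0 \<le> s \<Longrightarrow> s < t0 \<Longrightarrow> y \<in> X \<Longrightarrow> g (s, y) < 0"
    using first_touching_time[OF \<open>compact X\<close> \<open>0 \<le> t1\<close> \<open>x1 \<in> X\<close> _ cont] by blast
  have "0 < t0"
    using init[OF \<open>x0 \<in> X\<close>] \<open>0 \<le> g (t0, x0)\<close> t0 by (cases "t0 = 0") auto
  have at_t0: "g (t0, y) \<le> 0" if "y \<in> X" for y
  proof -
    have "continuous_on {0..t0} (\<lambda>s. g (s, y))"
      using that t0 by (intro continuous_on_compose2[OF cont] continuous_intros) auto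
    then have "closed ({0..t0} \<inter> (\<lambda>s. g (s, y)) -` {..0})"
      by (intro continuous_closed_preimage) auto
    moreover have "{0..<t0} \<subseteq> {0..t0} \<inter> (\<lambda>s. g (s, y)) -` {..0}"
    proof
      fix s assume "s \<in> {0..<t0}"
      then show "s \<in> {0..t0} \<inter> (\<lambda>s. g (s, y)) -` {..0}"
        using before[of s y] that by auto
    qed
    ultimately have "closure {0..<t0} \<subseteq> {0..t0} \<inter> (\<lambda>s. g (s, y)) -` {..0}"
      by (rule closure_minimal[rotated])
    then show ?thesis
      using \<open>0 < t0\<close> by (auto simp: subset_iff)
  qed
  have "g (t0, x0) = 0"
    using at_t0[OF \<open>x0 \<in> X\<close>] \<open>0 \<le> g (t0, x0)\<close> by simp
  then have "gt (t0, x0) < 0"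
    by (rule touch[OF \<open>0 < t0\<close> \<open>t0 \<le> t1\<close> \<open>x0 \<in> X\<close> _ at_t0])
  moreover have "t0 \<in> {0..t1}" using t0 by simp
  ultimately obtain d where "d > 0"
    and d: "\<forall>h>0. t0 - h \<in> {0..t0} \<longrightarrow> h < d \<longrightarrow> g (t0, x0) < g (t0 - h, x0)"
    using has_real_derivative_neg_dec_left[OF der[OF _ \<open>x0 \<in> X\<close>]] by blast
  define h where "h = min d t0 / 2"
  have "0 < h" "h < d" "t0 - h \<in> {0..t0}" "t0 - h < t0"
    using \<open>d > 0\<close> \<open>0 < t0\<close> unfolding h_def by auto
  then have "0 < g (t0 - h, x0)"
    using d \<open>g (t0, x0) = 0\<close> by auto
  moreover have "g (t0 - h, x0) < 0"
    using before \<open>t0 - h \<in> {0..t0}\<close> \<open>t0 - h < t0\<close> \<open>x0 \<in> X\<close> by simp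
  ultimately show False by simp
qed

section \<open>The flow under Calabi symmetry\<close>

lemma arctan_divide_derivative_eq:
  fixes u w c :: real
  assumes "w \<noteq> 0"
  shows "inverse (1 + (u / w)\<^sup>2) * (c / (w * w)) = c / (w\<^sup>2 + u\<^sup>2)"
proof -
  have "w\<^sup>2 + u\<^sup>2 \<noteq> 0"
    using assms by (simp add: add_nonneg_eq_0_iff)
  moreover have "1 + (u / w)\<^sup>2 = (w\<^sup>2 + u\<^sup>2) / w\<^sup>2"
    using assms by (simp add: field_simps)
  ultimately show ?thesis
    using assms by (simp add: power2_eq_square)
qed

lemma DERIV_arctan_divide:
  fixes f g :: "real \<Rightarrow> real"
  assumes "(f has_real_derivative f') (at x within X)" "(g has_real_derivative g') (at x within X)"
    and "g x \<noteq> 0"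
  shows "((\<lambda>y. arctan (f y / g y)) has_real_derivative
      (f' * g x - f x * g') / ((g x)\<^sup>2 + (f x)\<^sup>2)) (at x within X)"
  using DERIV_chain2[OF DERIV_arctan DERIV_divide[OF assms]]
  unfolding arctan_divide_derivative_eq[OF \<open>g x \<noteq> 0\<close>] .

lemma arctan_quotient_deriv_bound:
  fixes c x f V N U a :: real
  assumes "1 \<le> x" "x \<le> a" "0 \<le> f" "f \<le> V" "0 \<le> N" "\<bar>c\<bar> \<le> U"
  shows "c * (N * (x * V - f) / (x\<^sup>2 + f\<^sup>2)) \<le> U * N * a * V"
proof -
  have "1 \<le> x\<^sup>2 + f\<^sup>2"
    using assms(1) by (simp add: add_increasing2 one_le_power)
  have "0 \<le> x * V - f" "x * V - f \<le> a * V"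
    using assms mult_right_mono[of 1 x V] mult_right_mono[of x a V] by auto
  moreover have "(x * V - f) / (x\<^sup>2 + f\<^sup>2) \<le> (x * V - f) / 1"
    using \<open>1 \<le> x\<^sup>2 + f\<^sup>2\<close> \<open>0 \<le> x * V - f\<close> by (intro divide_left_mono) auto
  ultimately have X: "0 \<le> (x * V - f) / (x\<^sup>2 + f\<^sup>2)" "(x * V - f) / (x\<^sup>2 + f\<^sup>2) \<le> a * V"
    using \<open>1 \<le> x\<^sup>2 + f\<^sup>2\<close> by auto
  have "c * (N * (x * V - f) / (x\<^sup>2 + f\<^sup>2)) = c * (N * ((x * V - f) / (x\<^sup>2 + f\<^sup>2)))"
    by simp
  also have "\<dots> \<le> \<bar>c\<bar> * (N * ((x * V - f) / (x\<^sup>2 + f\<^sup>2)))"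
    using X assms by (intro mult_right_mono mult_nonneg_nonneg) auto
  also have "\<dots> \<le> U * (N * (a * V))"
    using X assms by (intro mult_mono mult_left_mono mult_nonneg_nonneg) auto
  finally show ?thesis
    by (simp add: algebra_simps)
qed

lemma abs_le_exp_growth:
  fixes v L M B t :: real
  assumes "v < M * exp (B * t)" "L \<le> v" "0 \<le> M" "0 \<le> B" "0 \<le> t"
  shows "\<bar>v\<bar> \<le> (\<bar>L\<bar> + M) * (1 + t) * exp (B * t)"
proof -
  define K where "K = (1 + t) * exp (B * t)"
  have "1 \<le> exp (B * t)"
    using assms by simp
  moreover have "exp (B * t) \<le> K"
    using \<open>0 \<le> t\<close> mult_right_mono[of 1 "1 + t" "exp (B * t)"] unfolding K_def by simp
  ultimately have K: "exp (B * t) \<le> K" "1 \<le> K"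
    by linarith+
  have "v \<le> M * K"
    using assms(1) mult_left_mono[OF K(1) \<open>0 \<le> M\<close>] by linarith
  moreover have "- v \<le> \<bar>L\<bar> * K"
    using assms(2) mult_left_mono[OF K(2), of "\<bar>L\<bar>"] by simp
  moreover have "0 \<le> \<bar>L\<bar> * K" "0 \<le> M * K"
    using K(2) \<open>0 \<le> M\<close> by simp_all
  moreover have "(\<bar>L\<bar> + M) * (1 + t) * exp (B * t) = \<bar>L\<bar> * K + M * K"
    unfolding K_def by (simp add: algebra_simps)
  ultimately show ?thesis
    by (intro abs_leI) linarith+
qed

locale supercritical_flow =
  fixes n :: nat and a p q :: real and T :: ereal
    and upp :: "real \<Rightarrow> real"
    and F :: "real \<times> real \<Rightarrow> real"
    and D :: "nat \<Rightarrow> nat \<Rightarrow> real \<times> real \<Rightarrow> real"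
    and S :: "(real \<times> real) set"
  assumes S_def: "S = {(t, x). 0 \<le> t \<and> ereal t < T \<and> 1 \<le> x \<and> x \<le> a}"
    and n3: "n \<ge> 3" and a1: "a > 1" and T0: "T > 0"
    and upp_smooth: "smooth1 upp"
    and upp_pos: "\<forall>x. 1 < x \<and> x < a \<longrightarrow> upp x > 0"
    and upp_end1: "upp 1 = 0" "deriv upp 1 > 0"
    and upp_enda: "upp a = 0" "deriv upp a < 0"
    and F_smooth: "smooth2_on S F D"
    and flow: "\<forall>t x. (t, x) \<in> S \<longrightarrow>
        D 1 0 (t, x) = upp x * (D 0 2 (t, x) / (1 + (D 0 1 (t, x))\<^sup>2)
           + real (n - 1) * (x * D 0 1 (t, x) - F (t, x)) / (x\<^sup>2 + (F (t, x))\<^sup>2))"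
    and bdry: "\<forall>t. 0 \<le> t \<and> ereal t < T \<longrightarrow> F (t, 1) = q \<and> F (t, a) = p"
    and supercritical: "\<forall>x. 1 \<le> x \<and> x \<le> a \<longrightarrow>
        real (n - 1) * arctan (F (0, x) / x) + arctan (D 0 1 (0, x)) > real (n - 2) * (pi / 2)"
begin

lemma mem_S: "(t, x) \<in> S \<longleftrightarrow> 0 \<le> t \<and> ereal t < T \<and> x \<in> {1..a}"
  by (auto simp: S_def)

lemma initial_in_S: "x \<in> {1..a} \<Longrightarrow> (0, x) \<in> S"
  using T0 by (simp add: mem_S zero_ereal_def)

lemma past_in_S: "(t, x) \<in> S \<Longrightarrow> s \<in> {0..t} \<Longrightarrow> y \<in> {1..a} \<Longrightarrow> (s, y) \<in> S"
  by (auto simp: mem_S intro: le_less_trans[of "ereal s" "ereal t" T])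

lemma same_time_in_S: "(t, x) \<in> S \<Longrightarrow> y \<in> {1..a} \<Longrightarrow> (t, y) \<in> S"
  by (simp add: mem_S)

lemma cylinder_max_principle:
  assumes "(t, x) \<in> S" and cont: "continuous_on S g"
    and der: "\<And>s y. (s, y) \<in> S \<Longrightarrow>
      ((\<lambda>s. g (s, y)) has_real_derivative gt (s, y)) (at s within {0..s})"
    and init: "\<And>y. y \<in> {1..a} \<Longrightarrow> g (0, y) < 0"
    and touch: "\<And>s y. (s, y) \<in> S \<Longrightarrow> 0 < s \<Longrightarrow> g (s, y) = 0 \<Longrightarrow>
      (\<And>y'. y' \<in> {1..a} \<Longrightarrow> g (s, y') \<le> 0) \<Longrightarrow> gt (s, y) < 0"
  shows "g (t, x) < 0"
proof -
  have "0 \<le> t" "x \<in> {1..a}"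
    using assms(1) by (simp_all add: mem_S)
  then show ?thesis
  proof (rule parabolic_max_principle[OF compact_Icc])
    show "continuous_on ({0..t} \<times> {1..a}) g"
      using cont by (rule continuous_on_subset) (auto intro: past_in_S[OF assms(1)])
  next
    fix s y assume "s \<in> {0..t}" "y \<in> {1..a}"
    then show "((\<lambda>s. g (s, y)) has_real_derivative gt (s, y)) (at s within {0..s})"
      by (intro der past_in_S[OF assms(1)])
  next
    fix s y assume "0 < s" "s \<le> t" "y \<in> {1..a}" "g (s, y) = 0"
      and below: "\<And>y'. y' \<in> {1..a} \<Longrightarrow> g (s, y') \<le> 0"
    then have "(s, y) \<in> S"
      using past_in_S[OF assms(1)] by simp
    then show "gt (s, y) < 0"
      by (rule touch[OF _ \<open>0 < s\<close> \<open>g (s, y) = 0\<close> below])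
  qed (rule init)
qed

lemma D00_eq_F: "z \<in> S \<Longrightarrow> D 0 0 z = F z"
  using F_smooth by (simp add: smooth2_on_def)

lemma D_continuous: "continuous_on S (D i j)"
  using F_smooth by (simp add: smooth2_on_def)

lemma D_deriv_x:
  assumes "(t, x) \<in> S"
  shows "((\<lambda>y. D i j (t, y)) has_real_derivative D i (Suc j) (t, x)) (at x within {1..a})"
proof -
  have "((\<lambda>y. D i j (t, y)) has_real_derivative D i (Suc j) (t, x)) (at x within {y. (t, y) \<in> S})"
    using F_smooth assms unfolding smooth2_on_def by blast
  moreover have "{y. (t, y) \<in> S} = {1..a}"
    using assms by (auto simp: mem_S)
  ultimately show ?thesis by simp
qed

lemma D_deriv_t:
  assumes "(t, x) \<in> S"
  shows "((\<lambda>s. D i j (s, x)) has_real_derivative D (Suc i) j (t, x)) (at t within {0..t})"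
proof (rule has_field_derivative_subset)
  show "((\<lambda>s. D i j (s, x)) has_real_derivative D (Suc i) j (t, x)) (at t within {s. (s, x) \<in> S})"
    using F_smooth assms unfolding smooth2_on_def by blast
  show "{0..t} \<subseteq> {s. (s, x) \<in> S}"
    using past_in_S[OF assms] assms by (auto simp: mem_S)
qed

lemma slope_deriv_x:
  "(t, y) \<in> S \<Longrightarrow> ((\<lambda>y. D 0 1 (t, y)) has_real_derivative D 0 2 (t, y)) (at y within {1..a})"
  using D_deriv_x[of t y 0 1] by (simp add: numeral_2_eq_2)

lemma N_ge_2: "2 \<le> real (n - 1)"
  using n3 by linarith

lemma real_n_minus_2: "real (n - 2) = real (n - 1) - 1"
  using n3 by (simp add: of_nat_diff)

lemma upp_pos_interior: "1 < x \<Longrightarrow> x < a \<Longrightarrow> 0 < upp x"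
  using upp_pos by blast

lemma upp_nonneg: "y \<in> {1..a} \<Longrightarrow> 0 \<le> upp y"
  using upp_pos_interior upp_end1(1) upp_enda(1) by (cases "y = 1 \<or> y = a") (auto simp: less_imp_le)

lemma upp_deriv: "(upp has_real_derivative deriv upp x) (at x)"
  using upp_smooth unfolding smooth1_def
  by (metis DERIV_deriv_iff_real_differentiable funpow_0)

lemma deriv_upp_bounded: "\<exists>U. \<forall>y\<in>{1..a}. \<bar>deriv upp y\<bar> \<le> U"
proof -
  have "(deriv ^^ 1) upp differentiable (at y)" for y
    using upp_smooth unfolding smooth1_def by blast
  then have "isCont (deriv upp) y" for y
    by (simp add: differentiable_imp_continuous_within)
  then have "continuous_on {1..a} (\<lambda>y. \<bar>deriv upp y\<bar>)"
    by (intro continuous_intros continuous_at_imp_continuous_on) auto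
  obtain y0 where "\<forall>y\<in>{1..a}. \<bar>deriv upp y\<bar> \<le> \<bar>deriv upp y0\<bar>"
    using continuous_attains_sup[OF compact_Icc _ \<open>continuous_on {1..a} _\<close>] a1 by auto
  then show ?thesis by blast
qed

lemma initial_continuous:
  assumes "continuous_on S h"
  shows "continuous_on {1..a} (\<lambda>y. h (0, y))"
  using initial_in_S by (intro continuous_on_compose2[OF assms] continuous_intros) auto

text \<open>The angle \<open>\<Theta>\<close> of \<open>\<alpha>\<^sub>t\<close> relative to \<open>\<omega>\<close> at \<open>z = (t, x)\<close>; in these terms the flow
  reads \<open>f\<^sub>t = u'' \<Theta>\<^sub>x\<close> (\<open>flow_phase_x\<close>).\<close>
definition phase :: "real \<times> real \<Rightarrow> real" where
  "phase z = real (n - 1) * arctan (D 0 0 z / snd z) + arctan (D 0 1 z)"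

definition phase_x :: "real \<times> real \<Rightarrow> real" where
  "phase_x z = D 0 2 z / (1 + (D 0 1 z)\<^sup>2)
     + real (n - 1) * (snd z * D 0 1 z - D 0 0 z) / ((snd z)\<^sup>2 + (D 0 0 z)\<^sup>2)"

definition phase_t :: "real \<times> real \<Rightarrow> real" where
  "phase_t z = D 1 1 z / (1 + (D 0 1 z)\<^sup>2)
     + real (n - 1) * (snd z * D 1 0 z) / ((snd z)\<^sup>2 + (D 0 0 z)\<^sup>2)"

lemma flow_phase_x: "(t, x) \<in> S \<Longrightarrow> D 1 0 (t, x) = upp x * phase_x (t, x)"
  using flow D00_eq_F by (simp add: phase_x_def)

lemma phase_continuous: "continuous_on S phase"
  unfolding phase_def by (intro continuous_intros D_continuous) (auto simp: S_def)

lemma phase_deriv_x: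
  assumes "(t, x) \<in> S"
  shows "((\<lambda>y. phase (t, y)) has_real_derivative phase_x (t, x)) (at x within {1..a})"
proof -
  have "x \<noteq> 0" using assms by (simp add: mem_S)
  have "((\<lambda>y. arctan (D 0 0 (t, y) / y)) has_real_derivative
      (D 0 1 (t, x) * x - D 0 0 (t, x) * 1) / (x\<^sup>2 + (D 0 0 (t, x))\<^sup>2)) (at x within {1..a})"
    using DERIV_arctan_divide[OF D_deriv_x[OF assms] DERIV_ident] \<open>x \<noteq> 0\<close> by simp
  moreover have "((\<lambda>y. arctan (D 0 1 (t, y))) has_real_derivative
      inverse (1 + (D 0 1 (t, x))\<^sup>2) * D 0 2 (t, x)) (at x within {1..a})"
    using DERIV_chain2[OF DERIV_arctan D_deriv_x[OF assms, of 0 1]] by (simp add: numeral_2_eq_2)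
  ultimately have "((\<lambda>y. phase (t, y)) has_real_derivative
      real (n - 1) * ((D 0 1 (t, x) * x - D 0 0 (t, x) * 1) / (x\<^sup>2 + (D 0 0 (t, x))\<^sup>2))
      + inverse (1 + (D 0 1 (t, x))\<^sup>2) * D 0 2 (t, x)) (at x within {1..a})"
    unfolding phase_def snd_conv by (rule DERIV_add[OF DERIV_cmult])
  then show ?thesis
    by (simp add: phase_x_def divide_inverse algebra_simps)
qed

lemma phase_deriv_t:
  assumes "(t, x) \<in> S"
  shows "((\<lambda>s. phase (s, x)) has_real_derivative phase_t (t, x)) (at t within {0..t})"
proof -
  have "x \<noteq> 0" using assms by (simp add: mem_S)
  have "((\<lambda>s. arctan (D 0 0 (s, x) / x)) has_real_derivative
      (D 1 0 (t, x) * x - D 0 0 (t, x) * 0) / (x\<^sup>2 + (D 0 0 (t, x))\<^sup>2)) (at t within {0..t})"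
    using DERIV_arctan_divide[OF D_deriv_t[OF assms] DERIV_const] \<open>x \<noteq> 0\<close> by simp
  moreover have "((\<lambda>s. arctan (D 0 1 (s, x))) has_real_derivative
      inverse (1 + (D 0 1 (t, x))\<^sup>2) * D 1 1 (t, x)) (at t within {0..t})"
    using DERIV_chain2[OF DERIV_arctan D_deriv_t[OF assms, of 0 1]] by simp
  ultimately have "((\<lambda>s. phase (s, x)) has_real_derivative
      real (n - 1) * ((D 1 0 (t, x) * x - D 0 0 (t, x) * 0) / (x\<^sup>2 + (D 0 0 (t, x))\<^sup>2))
      + inverse (1 + (D 0 1 (t, x))\<^sup>2) * D 1 1 (t, x)) (at t within {0..t})"
    unfolding phase_def snd_conv by (rule DERIV_add[OF DERIV_cmult])
  then show ?thesis
    by (simp add: phase_t_def divide_inverse algebra_simps)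
qed

lemma phase_t_nonneg_at_min:
  assumes "(t, x) \<in> S" and min: "\<And>y. y \<in> {1..a} \<Longrightarrow> phase (t, x) \<le> phase (t, y)"
  shows "0 \<le> phase_t (t, x)"
proof -
  have x: "x \<in> {1..a}" using assms by (simp add: mem_S)
  have der: "((\<lambda>y. phase (t, y)) has_real_derivative phase_x (t, y)) (at y within {1..a})"
    if "y \<in> {1..a}" for y
    using phase_deriv_x[OF same_time_in_S[OF assms(1) that]] .
  have flux: "D 1 0 (t, y) = upp y * phase_x (t, y)" if "y \<in> {1..a}" for y
    using flow_phase_x[OF same_time_in_S[OF assms(1) that]] .
  have "D 1 0 (t, x) = 0" "0 \<le> D 1 1 (t, x)"
    using DERIV_within_Icc_weighted_flux_at_min[OF a1 der flux D_deriv_x[OF assms(1), of 1 0]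
        upp_pos_interior upp_end1(1) upp_enda(1) x min] by simp_all
  then show ?thesis
    by (simp add: phase_t_def)
qed

text \<open>At a spatial minimum of \<open>\<Theta>\<close> the flux \<open>f\<^sub>t = u'' \<Theta>\<^sub>x\<close> vanishes and is nondecreasing in \<open>x\<close>,
  so \<open>\<Theta>\<^sub>t \<ge> 0\<close>; the perturbation \<open>\<delta> (1 + t)\<close> makes the first touching strict.\<close>
lemma phase_lower_bound_preserved:
  assumes init: "\<And>y. y \<in> {1..a} \<Longrightarrow> m \<le> phase (0, y)" and "(t, x) \<in> S"
  shows "m \<le> phase (t, x)"
proof (rule field_le_epsilon)
  fix e :: real assume "0 < e"
  have "0 \<le> t" using \<open>(t, x) \<in> S\<close> by (simp add: mem_S)
  define \<delta> where "\<delta> = e / (1 + t)"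
  have "0 < \<delta>" using \<open>0 < e\<close> \<open>0 \<le> t\<close> by (simp add: \<delta>_def)
  define g where "g z = m - \<delta> * (1 + fst z) - phase z" for z
  have "g (t, x) < 0"
  proof (rule cylinder_max_principle[OF \<open>(t, x) \<in> S\<close>, where gt = "\<lambda>z. - \<delta> - phase_t z"])
    show "continuous_on S g"
      unfolding g_def by (intro continuous_intros phase_continuous)
  next
    fix s y assume "(s, y) \<in> S"
    show "((\<lambda>s. g (s, y)) has_real_derivative - \<delta> - phase_t (s, y)) (at s within {0..s})"
      unfolding g_def using phase_deriv_t[OF \<open>(s, y) \<in> S\<close>]
      by (auto intro!: derivative_eq_intros)
  next
    fix y :: real assume "y \<in> {1..a}"
    then show "g (0, y) < 0"
      using init[of y] \<open>0 < \<delta>\<close> by (simp add: g_def)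
  next
    fix s y assume "(s, y) \<in> S" "g (s, y) = 0" and below: "\<And>y'. y' \<in> {1..a} \<Longrightarrow> g (s, y') \<le> 0"
    have "phase (s, y) \<le> phase (s, y')" if "y' \<in> {1..a}" for y'
      using below[OF that] \<open>g (s, y) = 0\<close> by (simp add: g_def)
    then have "0 \<le> phase_t (s, y)"
      by (rule phase_t_nonneg_at_min[OF \<open>(s, y) \<in> S\<close>])
    then show "- \<delta> - phase_t (s, y) < 0"
      using \<open>0 < \<delta>\<close> by simp
  qed
  moreover have "\<delta> * (1 + t) = e"
    using \<open>0 \<le> t\<close> by (simp add: \<delta>_def)
  ultimately show "m \<le> phase (t, x) + e"
    by (simp add: g_def)
qed

lemma phase_lower_bound: "\<exists>m > real (n - 2) * (pi / 2). \<forall>z\<in>S. m \<le> phase z"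
proof -
  obtain x0 where x0: "x0 \<in> {1..a}" and min: "\<And>y. y \<in> {1..a} \<Longrightarrow> phase (0, x0) \<le> phase (0, y)"
    using continuous_attains_inf[OF compact_Icc _ initial_continuous[OF phase_continuous]] a1
    by auto
  have "real (n - 2) * (pi / 2) < phase (0, x0)"
    using supercritical x0 D00_eq_F[OF initial_in_S[OF x0]] by (simp add: phase_def)
  moreover have "\<forall>z\<in>S. phase (0, x0) \<le> phase z"
    using phase_lower_bound_preserved[OF min] by auto
  ultimately show ?thesis by blast
qed

lemma flow_positive:
  assumes "(t, x) \<in> S"
  shows "0 < D 0 0 (t, x)"
proof -
  obtain m where m: "real (n - 2) * (pi / 2) < m" "m \<le> phase (t, x)"
    using phase_lower_bound assms by blast
  have "arctan (D 0 1 (t, x)) < pi / 2"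
    by (rule arctan_ubound)
  moreover have "real (n - 1) * arctan (D 0 0 (t, x) / x) + arctan (D 0 1 (t, x)) \<ge> m"
    using m(2) by (simp add: phase_def)
  moreover have "(real (n - 1) - 2) * (pi / 2) = real (n - 2) * (pi / 2) - pi / 2"
    unfolding real_n_minus_2 by (simp add: algebra_simps)
  moreover have "0 \<le> (real (n - 1) - 2) * (pi / 2)"
    using N_ge_2 by simp
  ultimately have "0 < real (n - 1) * arctan (D 0 0 (t, x) / x)"
    using m(1) by linarith
  then have "0 < arctan (D 0 0 (t, x) / x)"
    by (rule zero_less_mult_pos) (use N_ge_2 in simp)
  then have "0 < D 0 0 (t, x) / x"
    by simp
  moreover have "1 \<le> x"
    using assms by (simp add: mem_S)
  ultimately show ?thesis
    by (simp add: zero_less_divide_iff)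
qed

lemma flow_t_neg_at_interior_max:
  assumes "(t, x) \<in> S" "1 < x" "x < a" "0 < D 0 0 (t, x)"
    and max: "\<And>y. y \<in> {1..a} \<Longrightarrow> D 0 0 (t, y) \<le> D 0 0 (t, x)"
  shows "D 1 0 (t, x) < 0"
proof -
  have der: "((\<lambda>y. D 0 0 (t, y)) has_real_derivative D 0 1 (t, y)) (at y within {1..a})"
    if "y \<in> {1..a}" for y
    using D_deriv_x[OF same_time_in_S[OF assms(1) that]] by simp
  have "D 0 1 (t, x) = 0" "D 0 2 (t, x) \<le> 0"
    using DERIV_within_Icc_interior_max[OF der slope_deriv_x[OF assms(1)] assms(2,3) max] by simp_all
  then have "D 0 2 (t, x) / (1 + (D 0 1 (t, x))\<^sup>2) \<le> 0"
    by simp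
  moreover have "real (n - 1) * (x * D 0 1 (t, x) - D 0 0 (t, x)) / (x\<^sup>2 + (D 0 0 (t, x))\<^sup>2) < 0"
    using \<open>D 0 1 (t, x) = 0\<close> \<open>0 < D 0 0 (t, x)\<close> N_ge_2
    by (intro divide_neg_pos mult_pos_neg) (auto intro: add_nonneg_pos)
  ultimately have "phase_x (t, x) < 0"
    unfolding phase_x_def snd_conv by linarith
  then show ?thesis
    using flow_phase_x[OF assms(1)] upp_pos_interior[OF assms(2,3)] by (simp add: mult_pos_neg)
qed

lemma flow_below_barrier:
  assumes "q < C" "p < C" and init: "\<And>y. y \<in> {1..a} \<Longrightarrow> D 0 0 (0, y) < C"
    and "(t, x) \<in> S"
  shows "D 0 0 (t, x) < C"
proof -
  have "0 < D 0 0 (0, 1)"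
    using a1 by (intro flow_positive initial_in_S) simp
  then have "0 < C"
    using init[of 1] a1 by simp
  have "D 0 0 (t, x) - C < 0"
  proof (rule cylinder_max_principle[OF \<open>(t, x) \<in> S\<close>, where gt = "D 1 0"])
    show "continuous_on S (\<lambda>z. D 0 0 z - C)"
      by (intro continuous_intros D_continuous)
  next
    fix s y assume "(s, y) \<in> S"
    then show "((\<lambda>s. D 0 0 (s, y) - C) has_real_derivative D 1 0 (s, y)) (at s within {0..s})"
      using DERIV_diff[OF D_deriv_t[of s y 0 0] DERIV_const, of C] by simp
  next
    fix y :: real assume "y \<in> {1..a}"
    then show "D 0 0 (0, y) - C < 0"
      using init by simp
  next
    fix s y assume sy: "(s, y) \<in> S" and touch: "D 0 0 (s, y) - C = 0"
      and below: "\<And>y'. y' \<in> {1..a} \<Longrightarrow> D 0 0 (s, y') - C \<le> 0"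
    have "D 0 0 (s, 1) = q" "D 0 0 (s, a) = p"
      using bdry D00_eq_F[OF same_time_in_S[OF sy]] a1 sy by (auto simp: mem_S)
    then have y: "1 < y" "y < a"
      using touch sy \<open>q < C\<close> \<open>p < C\<close> by (auto simp: mem_S less_le)
    show "D 1 0 (s, y) < 0"
    proof (rule flow_t_neg_at_interior_max[OF sy y])
      show "0 < D 0 0 (s, y)"
        using touch \<open>0 < C\<close> by simp
      show "D 0 0 (s, y') \<le> D 0 0 (s, y)" if "y' \<in> {1..a}" for y'
        using below[OF that] touch by simp
    qed
  qed
  then show ?thesis by simp
qed

lemma flow_bounded_above: "\<exists>C. \<forall>t x. (t, x) \<in> S \<longrightarrow> D 0 0 (t, x) < C"
proof -
  obtain x0 where "x0 \<in> {1..a}" and max: "\<forall>y\<in>{1..a}. D 0 0 (0, y) \<le> D 0 0 (0, x0)"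
    using continuous_attains_sup[OF compact_Icc _ initial_continuous[OF D_continuous[of 0 0]]] a1
    by auto
  define C where "C = \<bar>p\<bar> + \<bar>q\<bar> + \<bar>D 0 0 (0, x0)\<bar> + 1"
  have "q < C" "p < C"
    unfolding C_def by linarith+
  moreover have "D 0 0 (0, y) < C" if "y \<in> {1..a}" for y
    using max that unfolding C_def by fastforce
  ultimately show ?thesis
    using flow_below_barrier by blast
qed

definition phase_xx :: "real \<times> real \<Rightarrow> real" where
  "phase_xx z =
     (D 0 3 z * (1 + (D 0 1 z)\<^sup>2) - 2 * D 0 1 z * D 0 2 z * D 0 2 z) / (1 + (D 0 1 z)\<^sup>2)\<^sup>2
     + real (n - 1) * ((snd z * D 0 2 z * ((snd z)\<^sup>2 + (D 0 0 z)\<^sup>2)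
         - (2 * snd z + 2 * D 0 0 z * D 0 1 z) * (snd z * D 0 1 z - D 0 0 z))
       / ((snd z)\<^sup>2 + (D 0 0 z)\<^sup>2)\<^sup>2)"

lemma phase_x_deriv_x:
  assumes "(t, x) \<in> S"
  shows "((\<lambda>y. phase_x (t, y)) has_real_derivative phase_xx (t, x)) (at x within {1..a})"
proof -
  define f v w where "f = (\<lambda>y. D 0 0 (t, y))" and "v = (\<lambda>y. D 0 1 (t, y))"
    and "w = (\<lambda>y. D 0 2 (t, y))"
  have df: "(f has_real_derivative v x) (at x within {1..a})"
    using D_deriv_x[OF assms, of 0 0] by (simp add: f_def v_def)
  have dv: "(v has_real_derivative w x) (at x within {1..a})"
    using D_deriv_x[OF assms, of 0 1] by (simp add: v_def w_def numeral_2_eq_2)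
  have dw: "(w has_real_derivative D 0 3 (t, x)) (at x within {1..a})"
    using D_deriv_x[OF assms, of 0 2] by (simp add: w_def)
  have "x \<noteq> 0" using assms by (simp add: mem_S)
  have "1 + (v x)\<^sup>2 \<noteq> 0" "x\<^sup>2 + (f x)\<^sup>2 \<noteq> 0"
    using \<open>x \<noteq> 0\<close> by (auto simp: add_nonneg_eq_0_iff add_pos_nonneg)
  have "((\<lambda>y. 1 + (v y)\<^sup>2) has_real_derivative 2 * v x * w x) (at x within {1..a})"
    using dv by (auto intro!: derivative_eq_intros)
  from DERIV_quotient[OF dw this \<open>1 + (v x)\<^sup>2 \<noteq> 0\<close>]
  have d_slope_term: "((\<lambda>y. w y / (1 + (v y)\<^sup>2)) has_real_derivative
      (D 0 3 (t, x) * (1 + (v x)\<^sup>2) - 2 * v x * w x * w x) / (1 + (v x)\<^sup>2)\<^sup>2) (at x within {1..a})"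
    by (simp add: numeral_2_eq_2)
  have num: "((\<lambda>y. y * v y - f y) has_real_derivative x * w x) (at x within {1..a})"
    using df dv by (auto intro!: derivative_eq_intros)
  have den: "((\<lambda>y. y\<^sup>2 + (f y)\<^sup>2) has_real_derivative 2 * x + 2 * f x * v x) (at x within {1..a})"
    using df by (auto intro!: derivative_eq_intros)
  have d_angle_term: "((\<lambda>y. (y * v y - f y) / (y\<^sup>2 + (f y)\<^sup>2)) has_real_derivative
      (x * w x * (x\<^sup>2 + (f x)\<^sup>2) - (2 * x + 2 * f x * v x) * (x * v x - f x)) / (x\<^sup>2 + (f x)\<^sup>2)\<^sup>2)
      (at x within {1..a})"
    using DERIV_quotient[OF num den \<open>x\<^sup>2 + (f x)\<^sup>2 \<noteq> 0\<close>] by (simp add: numeral_2_eq_2)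
  have fun_eq: "(\<lambda>y. phase_x (t, y))
      = (\<lambda>y. w y / (1 + (v y)\<^sup>2) + real (n - 1) * ((y * v y - f y) / (y\<^sup>2 + (f y)\<^sup>2)))"
    by (simp add: phase_x_def f_def v_def w_def)
  have deriv_eq: "phase_xx (t, x) = (D 0 3 (t, x) * (1 + (v x)\<^sup>2) - 2 * v x * w x * w x) / (1 + (v x)\<^sup>2)\<^sup>2
      + real (n - 1) * ((x * w x * (x\<^sup>2 + (f x)\<^sup>2) - (2 * x + 2 * f x * v x) * (x * v x - f x))
        / (x\<^sup>2 + (f x)\<^sup>2)\<^sup>2)"
    by (simp add: phase_xx_def f_def v_def w_def)
  show ?thesis
    unfolding fun_eq deriv_eq by (rule DERIV_add[OF d_slope_term DERIV_cmult[OF d_angle_term]])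
qed

lemma D11_product_rule:
  assumes "(t, x) \<in> S"
  shows "D 1 1 (t, x) = deriv upp x * phase_x (t, x) + upp x * phase_xx (t, x)"
proof -
  have x: "x \<in> {1..a}" using assms by (simp add: mem_S)
  have "((\<lambda>y. upp y * phase_x (t, y)) has_real_derivative
      deriv upp x * phase_x (t, x) + phase_xx (t, x) * upp x) (at x within {1..a})"
    by (rule DERIV_mult[OF has_field_derivative_at_within[OF upp_deriv] phase_x_deriv_x[OF assms]])
  then have "((\<lambda>y. D 1 0 (t, y)) has_real_derivative
      deriv upp x * phase_x (t, x) + phase_xx (t, x) * upp x) (at x within {1..a})"
  proof (rule has_field_derivative_transform_within[OF _ zero_less_one x])
    fix y assume "y \<in> {1..a}"
    show "upp y * phase_x (t, y) = D 1 0 (t, y)"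
      using flow_phase_x[OF same_time_in_S[OF assms \<open>y \<in> {1..a}\<close>]] by (rule sym)
  qed
  moreover have "at x within {1..a} \<noteq> bot"
    using a1 x by (simp add: trivial_limit_within)
  ultimately show ?thesis
    using has_field_derivative_unique[OF D_deriv_x[OF assms, of 1 0]] by (simp add: algebra_simps)
qed

lemma phase_xx_nonpos_at_slope_max:
  assumes "(t, x) \<in> S" "1 < x" "x < a"
    and max: "\<And>y. y \<in> {1..a} \<Longrightarrow> D 0 1 (t, y) \<le> D 0 1 (t, x)"
    and "0 \<le> D 0 0 (t, x)" "D 0 0 (t, x) \<le> D 0 1 (t, x)"
  shows "phase_xx (t, x) \<le> 0"
proof -
  have "D 0 2 (t, x) = 0" "D 0 3 (t, x) \<le> 0"
    using DERIV_within_Icc_interior_max[OF slope_deriv_x[OF same_time_in_S[OF assms(1)]]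
        D_deriv_x[OF assms(1), of 0 2] assms(2,3) max] by simp_all
  moreover have "0 \<le> (2 * x + 2 * D 0 0 (t, x) * D 0 1 (t, x)) * (x * D 0 1 (t, x) - D 0 0 (t, x))"
    using assms(2,5,6) mult_right_mono[of 1 x "D 0 1 (t, x)"] by (intro mult_nonneg_nonneg) auto
  moreover have "D 0 3 (t, x) * (1 + (D 0 1 (t, x))\<^sup>2) \<le> 0"
    using \<open>D 0 3 (t, x) \<le> 0\<close> by (rule mult_nonpos_nonneg) simp
  ultimately show ?thesis
    unfolding phase_xx_def snd_conv using N_ge_2
    by (intro add_nonpos_nonpos divide_nonpos_nonneg mult_nonneg_nonpos) auto
qed

lemma slope_boundary_term_nonpos:
  assumes "(t, x) \<in> S" and max: "\<And>y. y \<in> {1..a} \<Longrightarrow> D 0 1 (t, y) \<le> D 0 1 (t, x)"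
  shows "deriv upp x * (D 0 2 (t, x) / (1 + (D 0 1 (t, x))\<^sup>2)) \<le> 0"
proof -
  have x: "x \<in> {1..a}" using assms by (simp add: mem_S)
  have w: "x < a \<Longrightarrow> D 0 2 (t, x) \<le> 0" "1 < x \<Longrightarrow> 0 \<le> D 0 2 (t, x)"
    using DERIV_within_Icc_sign_at_max[OF slope_deriv_x[OF assms(1)] max x] by simp_all
  consider "x = 1" | "x = a" | "1 < x" "x < a" using x by fastforce
  then show ?thesis
  proof cases
    case 1
    show ?thesis
    proof (rule mult_nonneg_nonpos)
      show "0 \<le> deriv upp x" using 1 upp_end1(2) by simp
      show "D 0 2 (t, x) / (1 + (D 0 1 (t, x))\<^sup>2) \<le> 0"
        using 1 w(1) a1 by (intro divide_nonpos_nonneg) auto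
    qed
  next
    case 2
    show ?thesis
    proof (rule mult_nonpos_nonneg)
      show "deriv upp x \<le> 0" using 2 upp_enda(2) by simp
      show "0 \<le> D 0 2 (t, x) / (1 + (D 0 1 (t, x))\<^sup>2)"
        using 2 w(2) a1 by (intro divide_nonneg_nonneg) auto
    qed
  next
    case 3
    then show ?thesis using w by simp
  qed
qed

lemma slope_diffusion_term_nonpos:
  assumes "(t, x) \<in> S" and max: "\<And>y. y \<in> {1..a} \<Longrightarrow> D 0 1 (t, y) \<le> D 0 1 (t, x)"
    and "0 \<le> D 0 0 (t, x)" "D 0 0 (t, x) \<le> D 0 1 (t, x)"
  shows "upp x * phase_xx (t, x) \<le> 0"
proof (cases "1 < x \<and> x < a")
  case True
  then have "phase_xx (t, x) \<le> 0"
    using phase_xx_nonpos_at_slope_max[OF assms(1) _ _ max assms(3,4)] by simp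
  then show ?thesis
    using upp_nonneg assms(1) by (simp add: mult_nonneg_nonpos mem_S)
next
  case False
  then have "upp x = 0"
    using assms(1) upp_end1(1) upp_enda(1) by (force simp: mem_S)
  then show ?thesis by simp
qed

text \<open>Differentiating the flow in \<open>x\<close> gives \<open>f'\<^sub>t = u''' \<Theta>\<^sub>x + u'' \<Theta>\<^sub>x\<^sub>x\<close>; at a maximum of \<open>f'\<close>
  only the part \<open>u''' (n - 1)(x f' - f)/(x\<^sup>2 + f\<^sup>2)\<close> can be positive.\<close>

lemma slope_rate_at_max:
  assumes "(t, x) \<in> S" and max: "\<And>y. y \<in> {1..a} \<Longrightarrow> D 0 1 (t, y) \<le> D 0 1 (t, x)"
    and "0 \<le> D 0 0 (t, x)" "D 0 0 (t, x) \<le> D 0 1 (t, x)"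
    and U: "\<And>y. y \<in> {1..a} \<Longrightarrow> \<bar>deriv upp y\<bar> \<le> U"
  shows "D 1 1 (t, x) \<le> U * real (n - 1) * a * D 0 1 (t, x)"
proof -
  have x: "x \<in> {1..a}" using assms by (simp add: mem_S)
  have "deriv upp x * (real (n - 1) * (x * D 0 1 (t, x) - D 0 0 (t, x)) / (x\<^sup>2 + (D 0 0 (t, x))\<^sup>2))
      \<le> U * real (n - 1) * a * D 0 1 (t, x)"
    using x assms(3,4) U[OF x] by (intro arctan_quotient_deriv_bound) auto
  then show ?thesis
    using slope_boundary_term_nonpos[OF assms(1) max] slope_diffusion_term_nonpos[OF assms(1) max assms(3,4)]
    unfolding D11_product_rule[OF assms(1)] phase_x_def snd_conv by (simp add: distrib_left)
qed

lemma slope_below_barrier: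
  assumes flow_below: "\<And>t x. (t, x) \<in> S \<Longrightarrow> D 0 0 (t, x) < M"
    and init: "\<And>y. y \<in> {1..a} \<Longrightarrow> D 0 1 (0, y) < M"
    and U: "\<And>y. y \<in> {1..a} \<Longrightarrow> \<bar>deriv upp y\<bar> \<le> U"
    and B: "U * real (n - 1) * a < B" "0 \<le> B"
    and "(t, x) \<in> S"
  shows "D 0 1 (t, x) < M * exp (B * t)"
proof -
  have "0 < M"
    using flow_positive[OF initial_in_S] flow_below[OF initial_in_S, of 1] a1 by fastforce
  have "D 0 1 (t, x) - M * exp (B * fst (t, x)) < 0"
  proof (rule cylinder_max_principle[OF \<open>(t, x) \<in> S\<close>,
        where gt = "\<lambda>z. D 1 1 z - B * (M * exp (B * fst z))"])
    show "continuous_on S (\<lambda>z. D 0 1 z - M * exp (B * fst z))"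
      by (intro continuous_intros D_continuous)
  next
    fix s y assume "(s, y) \<in> S"
    from D_deriv_t[OF this, of 0 1]
    show "((\<lambda>s. D 0 1 (s, y) - M * exp (B * fst (s, y))) has_real_derivative
        D 1 1 (s, y) - B * (M * exp (B * fst (s, y)))) (at s within {0..s})"
      by (auto intro!: derivative_eq_intros)
  next
    fix y :: real assume "y \<in> {1..a}"
    then show "D 0 1 (0, y) - M * exp (B * fst (0, y)) < 0"
      using init by simp
  next
    fix s y assume sy: "(s, y) \<in> S" and "0 < s"
      and touch: "D 0 1 (s, y) - M * exp (B * fst (s, y)) = 0"
      and below: "\<And>y'. y' \<in> {1..a} \<Longrightarrow> D 0 1 (s, y') - M * exp (B * fst (s, y')) \<le> 0"
    define V where "V = M * exp (B * s)"
    have "M \<le> V"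
      using \<open>0 < M\<close> \<open>0 \<le> B\<close> \<open>0 < s\<close> by (simp add: V_def)
    have V: "D 0 1 (s, y) = V"
      using touch by (simp add: V_def)
    have "D 1 1 (s, y) \<le> U * real (n - 1) * a * V"
    proof (rule slope_rate_at_max[OF sy _ _ _ U, unfolded V])
      show "D 0 1 (s, y') \<le> V" if "y' \<in> {1..a}" for y'
        using below[OF that] by (simp add: V_def)
      show "0 \<le> D 0 0 (s, y)" "D 0 0 (s, y) \<le> V"
        using flow_positive[OF sy] flow_below[OF sy] \<open>M \<le> V\<close> by simp_all
    qed
    also have "\<dots> < B * V"
      using B(1) \<open>0 < M\<close> \<open>M \<le> V\<close> by (intro mult_strict_right_mono) auto
    finally show "D 1 1 (s, y) - B * (M * exp (B * fst (s, y))) < 0"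
      by (simp add: V_def)
  qed
  then show ?thesis by simp
qed

text \<open>\<open>\<Theta> \<ge> m\<close> and \<open>f < C\<close> give \<open>arctan f' \<ge> m - (n - 1) arctan C > -\<pi>/2\<close>.\<close>
lemma slope_bounded_below: "\<exists>L. \<forall>t x. (t, x) \<in> S \<longrightarrow> L \<le> D 0 1 (t, x)"
proof -
  obtain m where m: "real (n - 2) * (pi / 2) < m" "\<forall>z\<in>S. m \<le> phase z"
    using phase_lower_bound by blast
  obtain C where C: "\<forall>t x. (t, x) \<in> S \<longrightarrow> D 0 0 (t, x) < C"
    using flow_bounded_above by blast
  define \<theta> where "\<theta> = m - real (n - 1) * arctan C"
  have "\<theta> \<le> arctan (D 0 1 (t, x))" if "(t, x) \<in> S" for t x
  proof -
    have "D 0 0 (t, x) / x \<le> D 0 0 (t, x)"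
      using flow_positive[OF that] that by (simp add: mem_S divide_le_eq mult_le_cancel_left1)
    also have "\<dots> < C"
      using C that by blast
    finally have "arctan (D 0 0 (t, x) / x) \<le> arctan C"
      by (simp add: arctan_le_iff)
    then have "real (n - 1) * arctan (D 0 0 (t, x) / x) \<le> real (n - 1) * arctan C"
      by (rule mult_left_mono) simp
    then show ?thesis
      using m(2) that unfolding \<theta>_def phase_def by fastforce
  qed
  moreover have "- (pi / 2) < \<theta>"
  proof -
    have "real (n - 1) * arctan C < real (n - 1) * (pi / 2)"
      using N_ge_2 arctan_ubound[of C] by (intro mult_strict_left_mono) auto
    moreover have "real (n - 2) * (pi / 2) = real (n - 1) * (pi / 2) - pi / 2"
      unfolding real_n_minus_2 by (simp add: algebra_simps)
    ultimately show ?thesis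
      using m(1) unfolding \<theta>_def by linarith
  qed
  ultimately have "tan \<theta> \<le> D 0 1 (t, x)" if "(t, x) \<in> S" for t x
    using arctan_tan[of \<theta>] arctan_ubound[of "D 0 1 (t, x)"] that
    by (metis arctan_le_iff order.strict_trans1)
  then show ?thesis by blast
qed

lemma slope_growth_bound:
  "\<exists>A B. \<forall>t x. (t, x) \<in> S \<longrightarrow> \<bar>D 0 1 (t, x)\<bar> \<le> A * (1 + t) * exp (B * t)"
proof -
  obtain C where C: "\<forall>t x. (t, x) \<in> S \<longrightarrow> D 0 0 (t, x) < C"
    using flow_bounded_above by blast
  obtain L where L: "\<forall>t x. (t, x) \<in> S \<longrightarrow> L \<le> D 0 1 (t, x)"
    using slope_bounded_below by blast
  obtain U where U: "\<forall>y\<in>{1..a}. \<bar>deriv upp y\<bar> \<le> U"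
    using deriv_upp_bounded by blast
  obtain x0 where max0: "\<forall>y\<in>{1..a}. D 0 1 (0, y) \<le> D 0 1 (0, x0)"
    using continuous_attains_sup[OF compact_Icc _ initial_continuous[OF D_continuous[of 0 1]]] a1
    by auto
  define M where "M = \<bar>C\<bar> + \<bar>D 0 1 (0, x0)\<bar> + 1"
  define B where "B = \<bar>U\<bar> * real (n - 1) * a + 1"
  have "U * real (n - 1) * a \<le> \<bar>U\<bar> * real (n - 1) * a"
    using a1 N_ge_2 by (intro mult_right_mono) auto
  moreover have "0 \<le> \<bar>U\<bar> * real (n - 1) * a"
    using a1 by simp
  ultimately have "U * real (n - 1) * a < B" "0 \<le> B"
    unfolding B_def by linarith+
  have "\<bar>D 0 1 (t, x)\<bar> \<le> (\<bar>L\<bar> + M) * (1 + t) * exp (B * t)" if tx: "(t, x) \<in> S" for t x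
  proof (rule abs_le_exp_growth)
    show "D 0 1 (t, x) < M * exp (B * t)"
    proof (rule slope_below_barrier[OF _ _ _ \<open>U * real (n - 1) * a < B\<close> \<open>0 \<le> B\<close> tx])
      show "D 0 0 (s, y) < M" if "(s, y) \<in> S" for s y
        using C that unfolding M_def by fastforce
      show "D 0 1 (0, y) < M" if "y \<in> {1..a}" for y
        using max0 that unfolding M_def by fastforce
    qed (use U in blast)
    show "L \<le> D 0 1 (t, x)" "0 \<le> M" "0 \<le> B" "0 \<le> t"
      using L tx \<open>0 \<le> B\<close> unfolding M_def by (auto simp: mem_S)
  qed
  then show ?thesis by blast
qed

end

theorem proposition4p5:
  fixes n :: nat and a p q :: real and T :: ereal
    and upp :: "real \<Rightarrow> real"
    and F :: "real \<times> real \<Rightarrow> real"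
    and D :: "nat \<Rightarrow> nat \<Rightarrow> real \<times> real \<Rightarrow> real"
  defines "S \<equiv> {(t, x). 0 \<le> t \<and> ereal t < T \<and> 1 \<le> x \<and> x \<le> a}"
  assumes n3: "n \<ge> 3" and a1: "a > 1" and T0: "T > 0"
    and upp_smooth: "smooth1 upp"
    and upp_pos: "\<forall>x. 1 < x \<and> x < a \<longrightarrow> upp x > 0"
    and upp_end1: "upp 1 = 0" "deriv upp 1 > 0"
    and upp_enda: "upp a = 0" "deriv upp a < 0"
    and F_smooth: "smooth2_on S F D"
    and flow: "\<forall>t x. (t, x) \<in> S \<longrightarrow>
        D 1 0 (t, x) = upp x * (D 0 2 (t, x) / (1 + (D 0 1 (t, x))\<^sup>2)
           + real (n - 1) * (x * D 0 1 (t, x) - F (t, x)) / (x\<^sup>2 + (F (t, x))\<^sup>2))"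
    and bdry: "\<forall>t. 0 \<le> t \<and> ereal t < T \<longrightarrow> F (t, 1) = q \<and> F (t, a) = p"
    and supercritical: "\<forall>x. 1 \<le> x \<and> x \<le> a \<longrightarrow>
        real (n - 1) * arctan (F (0, x) / x) + arctan (D 0 1 (0, x)) > real (n - 2) * (pi / 2)"
  shows "\<exists>A B. \<forall>t. 0 \<le> t \<and> ereal t < T \<longrightarrow>
           (\<forall>x. 1 \<le> x \<and> x \<le> a \<longrightarrow> \<bar>D 0 1 (t, x)\<bar> \<le> A * (1 + t) * exp (B * t))"
proof -
  interpret supercritical_flow n a p q T upp F D S
    by unfold_locales (fact S_def[THEN meta_eq_to_obj_eq] assms)+
  obtain A B where AB: "\<forall>t x. (t, x) \<in> S \<longrightarrow> \<bar>D 0 1 (t, x)\<bar> \<le> A * (1 + t) * exp (B * t)"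
    using slope_growth_bound by blast
  show ?thesis
  proof (intro exI allI impI)
    fix t x assume "0 \<le> t \<and> ereal t < T" "1 \<le> x \<and> x \<le> a"
    then have "(t, x) \<in> S" by (simp add: mem_S)
    then show "\<bar>D 0 1 (t, x)\<bar> \<le> A * (1 + t) * exp (B * t)"
      using AB by blast
  qed
qed

end
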